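(* Suppose users' budget and utility parameters are drawn i.i.d. from a distribution $\mathcal{D}$. Then there exists a market instance for which the expected constraint violation of the static expected equilibrium pricing algorithm (which posts the price vector $\mathbf{p}^*$ to every user, where $\mathbf{p}^*$ is computed with complete knowledge of $\mathcal{D}$) is $\Omega(\sqrt{n})$.
   Context: Online Fisher market: $m$ divisible goods, good $j$ with capacity $c_j=nd_j$, $d_j>0$; $n$ users arrive sequentially, user $t$ having budget $w_t>0$ and utility vector $\mathbf{u}_t\ge\mathbf{0}$, with $(w_t,\mathbf{u}_t)$ i.i.d. from $\mathcal{D}$ with bounded support. Given price vector $\mathbf{p}^t$, user $t$ consumes an optimal solution $\mathbf{x}_t$ of $\max \mathbf{u}_t^\top\mathbf{x}$ s.t. $(\mathbf{p}^t)^\top\mathbf{x}\le w_t$, $\mathbf{x}\ge\mathbf{0}$. The expected equilibrium price $\mathbf{p}^*$ is an optimal solution of $\min_{\mathbf{p}}\ \sum_{j=1}^m p_jd_j+\mathbb{E}_{(w,\mathbf{u})\sim\mathcal{D}}[w\log w-w\log(\min_{j\in[m]}p_j/u_j)-w]$ (equivalently, the equilibrium prices computed from the expected number of arrivals of each user type). The expected constraint violation is $V_n=\mathbb{E}[\|(\sum_{t=1}^n\mathbf{x}_t-\mathbf{c})_+\|_2]$. Asymptotics are as $n\to\infty$ with the instance fixed. *)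

theory Defs
  imports "HOL-Probability.Probability" "HOL-Library.Landau_Symbols"
begin

(* A user type: (budget w, utility vector u); goods are indexed by j < m. *)
type_synonym utype = "real \<times> (nat \<Rightarrow> real)"

(* Market instance: m goods, capacity per user d_j > 0, distribution D of user types,
   with bounded (here: finite) support, w > 0, u >= 0 and u not identically zero. *)
definition valid_instance :: "nat \<Rightarrow> (nat \<Rightarrow> real) \<Rightarrow> utype pmf \<Rightarrow> bool" where
  "valid_instance m d D \<longleftrightarrow>
     m \<ge> 1 \<and> (\<forall>j<m. d j > 0) \<and> finite (set_pmf D) \<and>
     (\<forall>(w,u)\<in>set_pmf D. w > 0 \<and> (\<forall>j<m. u j \<ge> 0) \<and> (\<exists>j<m. u j > 0))"

(* min_j p_j / u_j, where goods with u_j = 0 contribute +infinity *)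
definition min_ratio :: "nat \<Rightarrow> (nat \<Rightarrow> real) \<Rightarrow> (nat \<Rightarrow> real) \<Rightarrow> real" where
  "min_ratio m p u = Min {p j / u j | j. j < m \<and> u j > 0}"

(* prices at which the objective is finite *)
definition price_domain :: "nat \<Rightarrow> utype pmf \<Rightarrow> (nat \<Rightarrow> real) \<Rightarrow> bool" where
  "price_domain m D p \<longleftrightarrow>
     (\<forall>j<m. p j \<ge> 0) \<and> (\<forall>(w,u)\<in>set_pmf D. min_ratio m p u > 0)"

definition eq_objective :: "nat \<Rightarrow> (nat \<Rightarrow> real) \<Rightarrow> utype pmf \<Rightarrow> (nat \<Rightarrow> real) \<Rightarrow> real" where
  "eq_objective m d D p =
     (\<Sum>j<m. p j * d j) +
     measure_pmf.expectation D (\<lambda>(w,u). w * ln w - w * ln (min_ratio m p u) - w)"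

definition is_eq_price :: "nat \<Rightarrow> (nat \<Rightarrow> real) \<Rightarrow> utype pmf \<Rightarrow> (nat \<Rightarrow> real) \<Rightarrow> bool" where
  "is_eq_price m d D p \<longleftrightarrow> price_domain m D p \<and>
     (\<forall>q. price_domain m D q \<longrightarrow> eq_objective m d D p \<le> eq_objective m d D q)"

definition optimal_bundle :: "nat \<Rightarrow> (nat \<Rightarrow> real) \<Rightarrow> real \<Rightarrow> (nat \<Rightarrow> real) \<Rightarrow> (nat \<Rightarrow> real) \<Rightarrow> bool" where
  "optimal_bundle m p w u x \<longleftrightarrow>
     (\<forall>j<m. x j \<ge> 0) \<and> (\<Sum>j<m. p j * x j) \<le> w \<and>
     (\<forall>y. (\<forall>j<m. y j \<ge> 0) \<and> (\<Sum>j<m. p j * y j) \<le> w \<longrightarrow>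
          (\<Sum>j<m. u j * y j) \<le> (\<Sum>j<m. u j * x j))"

(* Expected constraint violation V_n. X n t \<omega> is the bundle consumed by user t (t < n)
   when the sample of user types is \<omega> (i.i.d. from D over {..<n}). *)
definition violation ::
  "nat \<Rightarrow> (nat \<Rightarrow> real) \<Rightarrow> utype pmf \<Rightarrow> (nat \<Rightarrow> nat \<Rightarrow> (nat \<Rightarrow> utype) \<Rightarrow> nat \<Rightarrow> real) \<Rightarrow> nat \<Rightarrow> real" where
  "violation m d D X n =
     measure_pmf.expectation (Pi_pmf {..<n} undefined (\<lambda>_. D))
       (\<lambda>\<omega>. sqrt (\<Sum>j<m. (max 0 ((\<Sum>t<n. X n t \<omega> j) - real n * d j))\<^sup>2))"

end

theory Submission
  imports Defs
begin

(* Take one good whose per-user capacity 2 is the mean budget, budgets 1 or 3 with equal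
   probability, and all users valuing the good alike. The expected equilibrium price is 1, so
   every user spends her whole budget on the good and the excess demand after n users is a
   simple symmetric random walk S_n. The violation is E (S_n)^+, and the pointwise bound
   max 0 x >= x/2 + x^2/(2t) - x^4/(8t^3) at t = sqrt n, together with E S_n = 0,
   E S_n^2 = n and E S_n^4 = 3n^2 - 2n, gives E (S_n)^+ >= sqrt n / 8. *)

lemma max_zero_ge_quartic:
  fixes x t :: real
  assumes t: "t > 0"
  shows "x / 2 + x^2 / (2 * t) - x^4 / (8 * t^3) \<le> max 0 x"
proof -
  define a where "a = \<bar>x\<bar>"
  have a: "a \<ge> 0" unfolding a_def by simp
  have "a^4 - 4*t^2*a^2 + 4*t^3*a = a * (a * (a - 2*t)^2 + 4*t*(a - t)^2)"
    by (simp add: power_def numeral_eq_Suc algebra_simps)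
  also have "\<dots> \<ge> 0" using a t by (intro mult_nonneg_nonneg add_nonneg_nonneg) auto
  finally have "a^2 / t - a^4 / (4 * t^3) \<le> a" using t
    by (simp add: field_simps power_def numeral_eq_Suc)
  moreover have "a^2 = x^2" "a^4 = x^4" unfolding a_def by (simp_all add: power_even_abs)
  moreover have "max 0 x = (a + x) / 2" unfolding a_def by (simp add: max_def abs_if)
  ultimately show ?thesis by (simp add: field_simps)
qed

lemma integral_pos_part_ge_of_moments:
  fixes X :: "'a \<Rightarrow> real"
  assumes int: "integrable M X" "integrable M (\<lambda>x. X x ^ 2)" "integrable M (\<lambda>x. X x ^ 4)"
    and mean: "integral\<^sup>L M X = 0"
    and second: "integral\<^sup>L M (\<lambda>x. X x ^ 2) = s ^ 2"
    and fourth: "integral\<^sup>L M (\<lambda>x. X x ^ 4) \<le> 3 * s ^ 4"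
    and s: "s > 0"
  shows "s / 8 \<le> integral\<^sup>L M (\<lambda>x. max 0 (X x))"
proof -
  have "s / 8 = s ^ 2 / (2 * s) - 3 * s ^ 4 / (8 * s ^ 3)"
    using s by (simp add: field_simps power_def numeral_eq_Suc)
  also have "\<dots> \<le> integral\<^sup>L M X / 2 + integral\<^sup>L M (\<lambda>x. X x ^ 2) / (2 * s)
      - integral\<^sup>L M (\<lambda>x. X x ^ 4) / (8 * s ^ 3)"
    using mean second fourth s by (simp add: divide_right_mono)
  also have "\<dots> = integral\<^sup>L M (\<lambda>x. X x / 2 + X x ^ 2 / (2 * s) - X x ^ 4 / (8 * s ^ 3))"
    using int by simp
  also have "\<dots> \<le> integral\<^sup>L M (\<lambda>x. max 0 (X x))"
    using int s by (intro integral_mono max_zero_ge_quartic) auto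
  finally show ?thesis .
qed

lemma finite_set_Pi_pmf:
  assumes "finite A" "\<And>x. x \<in> A \<Longrightarrow> finite (set_pmf (p x))"
  shows "finite (set_pmf (Pi_pmf A dflt p))"
  using assms by (subst set_Pi_pmf) (auto intro!: finite_PiE_dflt)

lemma expectation_Pi_pmf_insert:
  fixes g :: "('a \<Rightarrow> 'b) \<Rightarrow> real"
  assumes A: "finite A" "x \<notin> A" and fin: "\<And>y. y \<in> insert x A \<Longrightarrow> finite (set_pmf (p y))"
  shows "measure_pmf.expectation (Pi_pmf (insert x A) dflt p) g =
    measure_pmf.expectation (p x) (\<lambda>a. measure_pmf.expectation (Pi_pmf A dflt p) (\<lambda>f. g (f(x := a))))"
proof -
  let ?P = "Pi_pmf A dflt p"
  have "Pi_pmf (insert x A) dflt p = bind_pmf (p x) (\<lambda>a. map_pmf (\<lambda>f. f(x := a)) ?P)"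
    using A by (subst Pi_pmf_insert') (auto simp: map_pmf_def)
  then have "measure_pmf.expectation (Pi_pmf (insert x A) dflt p) g =
      (\<Sum>a\<in>set_pmf (p x). pmf (p x) a *\<^sub>R measure_pmf.expectation (map_pmf (\<lambda>f. f(x := a)) ?P) g)"
    using A fin by (simp only:) (rule pmf_expectation_bind; simp add: finite_set_Pi_pmf)
  also have "\<dots> = measure_pmf.expectation (p x) (\<lambda>a. measure_pmf.expectation ?P (\<lambda>f. g (f(x := a))))"
    using fin by (subst integral_measure_pmf[of "set_pmf (p x)"]) auto
  finally show ?thesis .
qed

locale symmetric_walk =
  fixes D :: "'a pmf" and \<xi> :: "'a \<Rightarrow> real"
  assumes finite_support: "finite (set_pmf D)"
    and rademacher_steps: "map_pmf \<xi> D = pmf_of_set {-1, 1}"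
begin

abbreviation samples :: "nat \<Rightarrow> (nat \<Rightarrow> 'a) pmf" where
  "samples n \<equiv> Pi_pmf {..<n} undefined (\<lambda>_. D)"

definition walk :: "nat \<Rightarrow> (nat \<Rightarrow> 'a) \<Rightarrow> real" where
  "walk n \<omega> = (\<Sum>t<n. \<xi> (\<omega> t))"

lemma integrable_samples [simp]: "integrable (samples n) (f :: _ \<Rightarrow> real)"
  by (intro integrable_measure_pmf_finite finite_set_Pi_pmf finite_support) auto

lemma walk_fun_upd: "walk (Suc n) (\<omega> (n := a)) = walk n \<omega> + \<xi> a"
proof -
  have "walk n (\<omega> (n := a)) = walk n \<omega>" unfolding walk_def by (intro sum.cong) auto
  then show ?thesis by (simp add: walk_def)
qed

lemma expectation_walk_Suc:
  fixes h :: "real \<Rightarrow> real"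
  shows "measure_pmf.expectation (samples (Suc n)) (\<lambda>\<omega>. h (walk (Suc n) \<omega>)) =
   measure_pmf.expectation (samples n) (\<lambda>\<omega>. (h (walk n \<omega> - 1) + h (walk n \<omega> + 1)) / 2)"
proof -
  let ?F = "\<lambda>s. measure_pmf.expectation (samples n) (\<lambda>\<omega>. h (walk n \<omega> + s))"
  have "measure_pmf.expectation (samples (Suc n)) (\<lambda>\<omega>. h (walk (Suc n) \<omega>)) =
      measure_pmf.expectation D (\<lambda>a. ?F (\<xi> a))"
    unfolding lessThan_Suc using finite_support
    by (simp add: expectation_Pi_pmf_insert walk_fun_upd)
  also have "\<dots> = measure_pmf.expectation (map_pmf \<xi> D) ?F" by simp
  also have "\<dots> = (?F (-1) + ?F 1) / 2"
    unfolding rademacher_steps by (subst integral_pmf_of_set) auto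
  finally show ?thesis by (simp add: add_divide_distrib)
qed

lemma walk_mean: "measure_pmf.expectation (samples n) (walk n) = 0"
proof (induction n)
  case (Suc n)
  then show ?case using expectation_walk_Suc[of n "\<lambda>s. s"] by simp
qed (simp add: walk_def)

lemma walk_second_moment: "measure_pmf.expectation (samples n) (\<lambda>\<omega>. walk n \<omega> ^ 2) = real n"
proof (induction n)
  case (Suc n)
  have "measure_pmf.expectation (samples (Suc n)) (\<lambda>\<omega>. walk (Suc n) \<omega> ^ 2) =
      measure_pmf.expectation (samples n) (\<lambda>\<omega>. walk n \<omega> ^ 2 + 1)"
    by (subst expectation_walk_Suc) (simp add: power2_eq_square algebra_simps)
  with Suc show ?case by simp
qed (simp add: walk_def)

lemma walk_fourth_moment:
  "measure_pmf.expectation (samples n) (\<lambda>\<omega>. walk n \<omega> ^ 4) = 3 * real n ^ 2 - 2 * real n"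
proof (induction n)
  case (Suc n)
  have "measure_pmf.expectation (samples (Suc n)) (\<lambda>\<omega>. walk (Suc n) \<omega> ^ 4) =
      measure_pmf.expectation (samples n) (\<lambda>\<omega>. walk n \<omega> ^ 4 + 6 * walk n \<omega> ^ 2 + 1)"
    by (subst expectation_walk_Suc, intro Bochner_Integration.integral_cong refl)
      (simp add: power_def numeral_eq_Suc algebra_simps)
  also have "\<dots> = measure_pmf.expectation (samples n) (\<lambda>\<omega>. walk n \<omega> ^ 4)
      + 6 * measure_pmf.expectation (samples n) (\<lambda>\<omega>. walk n \<omega> ^ 2) + 1"
    by simp
  finally show ?case by (simp add: Suc walk_second_moment) (simp add: power2_eq_square algebra_simps)
qed (simp add: walk_def)

lemma walk_pos_part_ge:
  assumes "n \<ge> 1"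
  shows "sqrt (real n) / 8 \<le> measure_pmf.expectation (samples n) (\<lambda>\<omega>. max 0 (walk n \<omega>))"
proof (rule integral_pos_part_ge_of_moments)
  have "sqrt (real n) ^ 4 = (sqrt (real n) ^ 2) ^ 2" by (simp only: power_mult[symmetric]) simp
  then show "measure_pmf.expectation (samples n) (\<lambda>\<omega>. walk n \<omega> ^ 4) \<le> 3 * sqrt (real n) ^ 4"
    by (simp add: walk_fourth_moment)
qed (use assms in \<open>simp_all add: walk_mean walk_second_moment\<close>)

end

lemma min_ratio_one_good: "u 0 > 0 \<Longrightarrow> min_ratio (Suc 0) p u = p 0 / u 0"
proof -
  assume "u 0 > 0"
  then have "{p j / u j | j. j < 1 \<and> u j > 0} = {p 0 / u 0}" by auto
  then show ?thesis unfolding min_ratio_def by simp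
qed

lemma optimal_bundle_one_good:
  assumes opt: "optimal_bundle 1 p w u x" and p: "p 0 > 0" and u: "u 0 > 0"
  shows "x 0 = w / p 0"
proof -
  have x: "x 0 \<ge> 0" "p 0 * x 0 \<le> w" using opt unfolding optimal_bundle_def by auto
  then have "w \<ge> 0" using p by (meson mult_nonneg_nonneg less_imp_le order_trans)
  then have "u 0 * (w / p 0) \<le> u 0 * x 0"
    using opt p unfolding optimal_bundle_def by (auto dest!: spec[of _ "\<lambda>_. w / p 0"])
  then have "w / p 0 \<le> x 0" using u by (rule mult_left_le_imp_le)
  moreover have "x 0 \<le> w / p 0" using x p by (simp add: field_simps)
  ultimately show ?thesis by simp
qed

lemma violation_one_good:
  "violation 1 d D X n = measure_pmf.expectation (Pi_pmf {..<n} undefined (\<lambda>_. D))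
     (\<lambda>\<omega>. max 0 ((\<Sum>t<n. X n t \<omega> 0) - real n * d 0))"
  unfolding violation_def by simp

definition budget_coin :: "utype pmf" where
  "budget_coin = pmf_of_set {(1, \<lambda>_. 1), (3, \<lambda>_. 1)}"

lemma set_pmf_budget_coin: "set_pmf budget_coin = {(1, \<lambda>_. 1), (3, \<lambda>_. 1)}"
  unfolding budget_coin_def by (subst set_pmf_of_set) auto

interpretation budget_walk: symmetric_walk budget_coin "\<lambda>(w, u). w - 2"
proof
  show "finite (set_pmf budget_coin)" by (simp add: set_pmf_budget_coin)
  show "map_pmf (\<lambda>(w, u). w - 2) budget_coin = pmf_of_set {-1, 1}"
    unfolding budget_coin_def by (subst map_pmf_of_set_inj) (auto simp: inj_on_def)
qed

lemma price_domain_budget_coin_iff: "price_domain 1 budget_coin q \<longleftrightarrow> q 0 > 0"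
  unfolding price_domain_def by (auto simp: set_pmf_budget_coin min_ratio_one_good)

lemma eq_objective_budget_coin:
  "eq_objective 1 (\<lambda>_. 2) budget_coin q = 2 * q 0 - 2 * ln (q 0) + (3 * ln 3 - 4) / 2"
  unfolding eq_objective_def budget_coin_def
  by (subst integral_pmf_of_set) (auto simp: min_ratio_one_good field_simps)

lemma is_eq_price_budget_coin_iff: "is_eq_price 1 (\<lambda>_. 2) budget_coin p \<longleftrightarrow> p 0 = 1"
proof
  assume "is_eq_price 1 (\<lambda>_. 2) budget_coin p"
  then have "p 0 > 0" "2 * p 0 - 2 * ln (p 0) \<le> 2"
    unfolding is_eq_price_def price_domain_budget_coin_iff eq_objective_budget_coin
    by (auto dest!: spec[of _ "\<lambda>_. 1"])
  moreover have "ln (p 0) \<le> p 0 - 1" using \<open>p 0 > 0\<close> by (rule ln_le_minus_one)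
  ultimately show "p 0 = 1" by (intro ln_eq_minus_one) auto
next
  assume "p 0 = 1"
  then show "is_eq_price 1 (\<lambda>_. 2) budget_coin p"
    unfolding is_eq_price_def price_domain_budget_coin_iff eq_objective_budget_coin
    using ln_le_minus_one by fastforce
qed

lemma violation_budget_coin_eq_walk:
  assumes "\<And>t \<omega>. t < n \<Longrightarrow> \<omega> t \<in> set_pmf budget_coin \<Longrightarrow> X n t \<omega> 0 = fst (\<omega> t)"
  shows "violation 1 (\<lambda>_. 2) budget_coin X n =
    measure_pmf.expectation (budget_walk.samples n) (\<lambda>\<omega>. max 0 (budget_walk.walk n \<omega>))"
  unfolding violation_one_good
proof (intro integral_cong_AE AE_pmfI)
  fix \<omega> assume "\<omega> \<in> set_pmf (budget_walk.samples n)"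
  then have "\<omega> t \<in> set_pmf budget_coin" if "t < n" for t
    using that by (auto simp: set_Pi_pmf PiE_dflt_def)
  then show "max 0 ((\<Sum>t<n. X n t \<omega> 0) - real n * 2) = max 0 (budget_walk.walk n \<omega>)"
    using assms by (simp add: budget_walk.walk_def sum_subtractf split_beta)
qed auto

lemma violation_budget_coin_ge:
  assumes "is_eq_price 1 (\<lambda>_. 2) budget_coin p"
    and "\<And>t \<omega>. t < n \<Longrightarrow> \<omega> t \<in> set_pmf budget_coin \<Longrightarrow>
      optimal_bundle 1 p (fst (\<omega> t)) (snd (\<omega> t)) (X n t \<omega>)"
    and "n \<ge> 1"
  shows "sqrt (real n) / 8 \<le> violation 1 (\<lambda>_. 2) budget_coin X n"
proof -
  have "p 0 = 1" using assms(1) unfolding is_eq_price_budget_coin_iff .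
  then have "X n t \<omega> 0 = fst (\<omega> t)" if "t < n" "\<omega> t \<in> set_pmf budget_coin" for t \<omega>
    using that assms(2) optimal_bundle_one_good[of p "fst (\<omega> t)" "snd (\<omega> t)" "X n t \<omega>"]
    by (auto simp: set_pmf_budget_coin)
  then have "violation 1 (\<lambda>_. 2) budget_coin X n =
      measure_pmf.expectation (budget_walk.samples n) (\<lambda>\<omega>. max 0 (budget_walk.walk n \<omega>))"
    by (rule violation_budget_coin_eq_walk)
  then show ?thesis using assms(3) by (simp only:) (rule budget_walk.walk_pos_part_ge)
qed

theorem corollary1:
  shows "\<exists>(m::nat) (d::nat \<Rightarrow> real) (D::utype pmf).
     valid_instance m d D \<and> (\<exists>p. is_eq_price m d D p) \<and>
     (\<forall>p X. is_eq_price m d D p \<longrightarrow>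
        (\<forall>n t \<omega>. t < n \<longrightarrow> \<omega> t \<in> set_pmf D \<longrightarrow>
            optimal_bundle m p (fst (\<omega> t)) (snd (\<omega> t)) (X n t \<omega>)) \<longrightarrow>
        (\<lambda>n. violation m d D X n) \<in> \<Omega>(\<lambda>n. sqrt (real n)))"
proof (intro exI conjI allI impI)
  show "valid_instance 1 (\<lambda>_. 2) budget_coin"
    unfolding valid_instance_def by (auto simp: set_pmf_budget_coin)
  show "is_eq_price 1 (\<lambda>_. 2) budget_coin (\<lambda>_. 1)" unfolding is_eq_price_budget_coin_iff ..
  fix p and X :: "nat \<Rightarrow> nat \<Rightarrow> (nat \<Rightarrow> utype) \<Rightarrow> nat \<Rightarrow> real"
  assume eq: "is_eq_price 1 (\<lambda>_. 2) budget_coin p"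
    and opt: "\<forall>n t \<omega>. t < n \<longrightarrow> \<omega> t \<in> set_pmf budget_coin \<longrightarrow>
      optimal_bundle 1 p (fst (\<omega> t)) (snd (\<omega> t)) (X n t \<omega>)"
  have "\<forall>\<^sub>F n in at_top. 1 / 8 * norm (sqrt (real n)) \<le> norm (violation 1 (\<lambda>_. 2) budget_coin X n)"
    using eventually_ge_at_top[of "1::nat"]
  proof eventually_elim
    case (elim n)
    have "sqrt (real n) / 8 \<le> violation 1 (\<lambda>_. 2) budget_coin X n"
      using eq opt elim by (intro violation_budget_coin_ge) auto
    then show ?case by (simp add: abs_if)
  qed
  then show "(\<lambda>n. violation 1 (\<lambda>_. 2) budget_coin X n) \<in> \<Omega>(\<lambda>n. sqrt (real n))"
    by (intro landau_omega.bigI[of "1 / 8"]) auto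
qed

end
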